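(* Let $Z\in\{0,1\}^{n\times k}$ have exactly one $1$ in each row and at least one $1$ in each column, let $B\in[0,1]^{k\times k}$ be symmetric and full rank, and let $\mathscr{W}=ZBZ^T$. Let $\mathscr{D}$ be the diagonal matrix with $\mathscr{D}_{ii}=\sum_k\mathscr{W}_{ik}$ and $\mathscr{L}=\mathscr{D}^{-1/2}\mathscr{W}\mathscr{D}^{-1/2}$. Then there exists a matrix $\mu\in\mathbb{R}^{k\times k}$ such that the columns of $Z\mu$ are the eigenvectors of $\mathscr{L}$ corresponding to the nonzero eigenvalues of $\mathscr{L}$. Further, for all $i,j$, \[ z_i\mu=z_j\mu\iff z_i=z_j, \] where $z_i$ denotes the $i$th row of $Z$.
   Context: This is the population version of the Stochastic Blockmodel with $k$ blocks: $Z_{ig}=1$ means node $i$ belongs to block $g$, and $B$ contains the within- and between-block edge probabilities. *)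

theory Defs
  imports "HOL-Analysis.Analysis"
begin

definition sbm_W :: "real^'k^'n \<Rightarrow> real^'k^'k \<Rightarrow> real^'n^'n" where
  "sbm_W Z B = Z ** B ** transpose Z"

definition sbm_D :: "real^'k^'n \<Rightarrow> real^'k^'k \<Rightarrow> real^'n^'n" where
  "sbm_D Z B = (\<chi> i j. if i = j then (\<Sum>l\<in>UNIV. sbm_W Z B $ i $ l) else 0)"

definition sbm_D_inv_sqrt :: "real^'k^'n \<Rightarrow> real^'k^'k \<Rightarrow> real^'n^'n" where
  "sbm_D_inv_sqrt Z B = (\<chi> i j. if i = j then inverse (sqrt (sbm_D Z B $ i $ i)) else 0)"

definition sbm_L :: "real^'k^'n \<Rightarrow> real^'k^'k \<Rightarrow> real^'n^'n" where
  "sbm_L Z B = sbm_D_inv_sqrt Z B ** sbm_W Z B ** sbm_D_inv_sqrt Z B"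

definition is_eigenvector :: "real^'n^'n \<Rightarrow> real^'n \<Rightarrow> real \<Rightarrow> bool" where
  "is_eigenvector A v lam \<longleftrightarrow> v \<noteq> 0 \<and> A *v v = lam *\<^sub>R v"

end

theory Submission
  imports Defs
begin

text \<open>All nodes of a block have the same degree, so D^(-1/2) Z = Z \<Delta> for the diagonal matrix
  \<Delta> of inverse square roots of the block degrees, and L = Z K with K = \<Delta> B \<Delta> Z^T. Thus L is
  symmetric and maps into the k-dimensional column space of Z, on which it is injective because
  Z, \<Delta>, B and Z^T Z are. The spectral theorem for L restricted to this invariant subspace gives
  an orthonormal eigenbasis with nonzero eigenvalues, written as the columns of Z \<mu>; every other
  eigenvector with nonzero eigenvalue lies in the range of L, hence in their span. Orthonormality
  of the columns of Z \<mu> makes \<mu> invertible, so z_i \<mu> = z_j \<mu> only if z_i = z_j.\<close>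

lemma symmetric_matrix_inner_commute:
  fixes A :: "real^'n^'n"
  assumes "transpose A = A"
  shows "(A *v x) \<bullet> y = x \<bullet> (A *v y)"
proof -
  have "(A *v x) \<bullet> y = (x v* transpose A) \<bullet> y" by simp
  also have "\<dots> = x \<bullet> (A *v y)" using assms by (simp only: dot_lmul_matrix)
  finally show ?thesis .
qed

lemma transpose_matrix_inner:
  fixes Z :: "real^'k^'n"
  shows "(Z *v y) \<bullet> w = y \<bullet> (transpose Z *v w)"
  using dot_lmul_matrix[of y "transpose Z" w] by simp

lemma column_matrix_matrix_mult:
  fixes A :: "real^'m^'n" and B :: "real^'k^'m"
  shows "column j (A ** B) = A *v column j B"
  by (simp add: column_def matrix_matrix_mult_def matrix_vector_mult_def vec_eq_iff mult.commute)

lemma nonneg_eq_0_if_quadratic_nonpos: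
  fixes a c :: real
  assumes quad: "\<And>t. 2 * t * a + t * t * c \<le> 0" and "a \<ge> 0"
  shows "a = 0"
proof (cases "c \<ge> 0")
  case True
  then show ?thesis using quad[of 1] \<open>a \<ge> 0\<close> by simp
next
  case False
  have "2 * (a / - c) * a + (a / - c) * (a / - c) * c = a * a / - c"
    using False by (simp add: field_simps power2_eq_square)
  then have "a * a / - c \<le> 0" using quad[of "a / - c"] by argo
  moreover have "0 \<le> a * a / - c" using False by (intro divide_nonneg_pos) auto
  ultimately have "a * a / - c = 0" by linarith
  then show ?thesis using False by simp
qed

lemma rayleigh_maximizer_exists:
  fixes A :: "real^'n^'n"
  assumes S: "subspace S" and "S \<noteq> {0}"
  obtains u where "u \<in> S" "norm u = 1"
    "\<And>y. y \<in> S \<Longrightarrow> y \<bullet> (A *v y) \<le> (u \<bullet> (A *v u)) * (y \<bullet> y)"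
proof -
  let ?K = "S \<inter> sphere 0 1"
  let ?q = "\<lambda>x. x \<bullet> (A *v x)"
  obtain x where "x \<in> S" "x \<noteq> 0" using assms subspace_0 by blast
  then have "x /\<^sub>R norm x \<in> ?K" using S by (simp add: subspace_scale)
  then have nonempty: "?K \<noteq> {}" by blast
  have compact: "compact ?K"
    using compact_Int_closed[OF compact_sphere closed_subspace[OF S]] by (simp add: Int_commute)
  have "continuous_on ?K ?q"
    by (intro continuous_on_inner continuous_on_id matrix_vector_mult_linear_continuous_on)
  then obtain u where u: "u \<in> ?K" and max: "\<And>y. y \<in> ?K \<Longrightarrow> ?q y \<le> ?q u"
    using continuous_attains_sup[OF compact nonempty] by blast
  have "?q y \<le> ?q u * (y \<bullet> y)" if "y \<in> S" for y
  proof (cases "y = 0")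
    case False
    have "y /\<^sub>R norm y \<in> ?K" using that False S by (simp add: subspace_scale)
    then have "?q (y /\<^sub>R norm y) \<le> ?q u" by (rule max)
    moreover have "?q (y /\<^sub>R norm y) = ?q y / (y \<bullet> y)"
      by (simp add: matrix_vector_mult_scaleR power2_eq_square field_simps
          flip: power2_norm_eq_inner)
    ultimately show ?thesis using False by (simp add: divide_le_eq)
  qed simp
  with u that show ?thesis by auto
qed

text \<open>Perturbing a Rayleigh maximiser u along the residual r = Au - Mu gives a quadratic in t that
  is nonpositive everywhere and has linear coefficient |r|^2, so r = 0.\<close>

lemma rayleigh_maximizer_is_eigenvector:
  fixes A :: "real^'n^'n"
  assumes sym: "transpose A = A" and S: "subspace S" and inv: "\<And>x. x \<in> S \<Longrightarrow> A *v x \<in> S"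
    and u: "u \<in> S" "u \<bullet> u = 1"
    and max: "\<And>y. y \<in> S \<Longrightarrow> y \<bullet> (A *v y) \<le> (u \<bullet> (A *v u)) * (y \<bullet> y)"
  shows "A *v u = (u \<bullet> (A *v u)) *\<^sub>R u"
proof -
  define M where "M = u \<bullet> (A *v u)"
  define r where "r = A *v u - M *\<^sub>R u"
  have rS: "r \<in> S" using S inv u by (simp add: r_def subspace_diff subspace_scale)
  have r_Au: "r \<bullet> (A *v u) = r \<bullet> r + M * (r \<bullet> u)"
    by (simp add: r_def inner_diff_right algebra_simps)
  have "2 * t * (r \<bullet> r) + t * t * (r \<bullet> (A *v r) - M * (r \<bullet> r)) \<le> 0" for t
  proof -
    have "u + t *\<^sub>R r \<in> S" using S u rS by (simp add: subspace_add subspace_scale)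
    from max[OF this] have
      "M + 2 * t * (r \<bullet> (A *v u)) + t * t * (r \<bullet> (A *v r))
        \<le> M * (1 + 2 * t * (r \<bullet> u) + t * t * (r \<bullet> r))"
      using u symmetric_matrix_inner_commute[OF sym, of r u]
      by (simp add: M_def matrix_vector_right_distrib matrix_vector_mult_scaleR inner_add_left
          inner_add_right inner_commute algebra_simps)
    then show ?thesis unfolding r_Au by (simp add: algebra_simps)
  qed
  then have "r \<bullet> r = 0" by (rule nonneg_eq_0_if_quadratic_nonpos) simp
  then show ?thesis by (simp add: r_def M_def)
qed

lemma symmetric_matrix_invariant_subspace_eigenvector:
  fixes A :: "real^'n^'n"
  assumes "transpose A = A" "subspace S" "\<And>x. x \<in> S \<Longrightarrow> A *v x \<in> S" "S \<noteq> {0}"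
  obtains u c where "u \<in> S" "norm u = 1" "A *v u = c *\<^sub>R u"
proof -
  obtain u where "u \<in> S" "norm u = 1"
    "\<And>y. y \<in> S \<Longrightarrow> y \<bullet> (A *v y) \<le> (u \<bullet> (A *v u)) * (y \<bullet> y)"
    using rayleigh_maximizer_exists assms(2,4) by metis
  with rayleigh_maximizer_is_eigenvector[OF assms(1-3)] show ?thesis
    by (intro that) (auto simp: norm_eq_1)
qed

lemma symmetric_matrix_invariant_subspace_orthonormal_eigenbasis:
  fixes A :: "real^'n^'n"
  assumes sym: "transpose A = A"
  shows "subspace S \<Longrightarrow> (\<And>x. x \<in> S \<Longrightarrow> A *v x \<in> S) \<Longrightarrow>
    \<exists>E. E \<subseteq> S \<and> span E = S \<and> pairwise orthogonal E \<and>
        (\<forall>e\<in>E. norm e = 1 \<and> (\<exists>c. A *v e = c *\<^sub>R e))"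
proof (induction "dim S" arbitrary: S rule: less_induct)
  case less
  show ?case
  proof (cases "S = {0}")
    case True
    then show ?thesis by (intro exI[of _ "{}"]) auto
  next
    case False
    obtain u c where uS: "u \<in> S" and nu: "norm u = 1" and uc: "A *v u = c *\<^sub>R u"
      using symmetric_matrix_invariant_subspace_eigenvector[OF sym less.prems False] .
    have uu: "u \<bullet> u = 1" using nu by (simp add: dot_square_norm)
    define S' where "S' = {x\<in>S. x \<bullet> u = 0}"
    have sub': "subspace S'" using less.prems(1)
      unfolding S'_def subspace_def by (auto simp: inner_add_left)
    have inv': "A *v x \<in> S'" if "x \<in> S'" for x
      using that less.prems(2) symmetric_matrix_inner_commute[OF sym, of x u] uc
      by (simp add: S'_def)
    have "S' \<subset> S" using uS uu unfolding S'_def by force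
    then have "dim S' < dim S"
      using sub' less.prems(1) by (intro dim_psubset) (simp add: span_eq_iff[THEN iffD2])
    then obtain E' where E': "E' \<subseteq> S'" "span E' = S'" "pairwise orthogonal E'"
      "\<forall>e\<in>E'. norm e = 1 \<and> (\<exists>c. A *v e = c *\<^sub>R e)"
      using less.hyps sub' inv' by blast
    have "S \<subseteq> span (insert u E')"
    proof
      fix x assume x: "x \<in> S"
      have "x - (x \<bullet> u) *\<^sub>R u \<in> S'"
        using x uS uu less.prems(1) by (simp add: S'_def subspace_diff subspace_scale inner_diff_left)
      then have "x - (x \<bullet> u) *\<^sub>R u \<in> span (insert u E')"
        using E'(2) span_mono[of E' "insert u E'"] by auto
      moreover have "(x \<bullet> u) *\<^sub>R u \<in> span (insert u E')" by (intro span_mul span_base) simp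
      ultimately have "(x - (x \<bullet> u) *\<^sub>R u) + (x \<bullet> u) *\<^sub>R u \<in> span (insert u E')"
        by (rule span_add)
      then show "x \<in> span (insert u E')" by simp
    qed
    moreover have "span (insert u E') \<subseteq> S"
      using uS E'(1) less.prems(1) by (intro span_minimal) (auto simp: S'_def)
    ultimately show ?thesis
      using uS E' nu uc
      by (intro exI[of _ "insert u E'"])
        (auto simp: S'_def pairwise_insert orthogonal_def inner_commute)
  qed
qed

lemma dim_range_injective_matrix:
  fixes Z :: "real^'k^'n"
  assumes "\<And>y. Z *v y = 0 \<Longrightarrow> y = 0"
  shows "dim (range ((*v) Z)) = CARD('k)"
proof -
  have "inj_on ((*v) Z) (span UNIV)"
    using assms by (intro inj_onI) (metis matrix_vector_mult_diff_distrib right_minus_eq)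
  then have "dim (range ((*v) Z)) = dim (UNIV :: (real^'k) set)"
    by (intro eucl.dim_image_eq) simp
  then show ?thesis using vec_dim_card[where 'a=real and 'n='k] by (simp add: dim_vec_eq)
qed

lemma basis_of_range_as_columns:
  fixes Z :: "real^'k^'n"
  assumes Z_inj: "\<And>y. Z *v y = 0 \<Longrightarrow> y = 0"
    and E: "independent E" "span E = range ((*v) Z)"
  obtains \<mu> :: "real^'k^'k" where "bij_betw (\<lambda>j. column j (Z ** \<mu>)) UNIV E"
proof -
  have "finite E" using E(1) by (rule finiteI_independent)
  have "card E = dim (range ((*v) Z))" using dim_eq_card_independent[OF E(1)] E(2) dim_span by metis
  also have "\<dots> = CARD('k)" using Z_inj by (rule dim_range_injective_matrix)
  finally have "card E = CARD('k)" .
  obtain e where e: "bij_betw e (UNIV :: 'k set) E"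
    using finite_same_card_bij[of "UNIV :: 'k set" E] \<open>finite E\<close> \<open>card E = CARD('k)\<close> by auto
  moreover have "E \<subseteq> range ((*v) Z)" using E(2) span_superset by metis
  ultimately have "e j \<in> range ((*v) Z)" for j using bij_betwE by blast
  then have "\<forall>j. \<exists>y. Z *v y = e j" by (metis imageE)
  then obtain y where y: "\<And>j. Z *v y j = e j" by metis
  have "(\<lambda>j. column j (Z ** (\<chi> i j. y j $ i))) = e"
    unfolding column_matrix_matrix_mult by (simp add: column_def y)
  with e show ?thesis by (intro that[of "\<chi> i j. y j $ i"]) simp
qed

lemma symmetric_matrix_factorization_eigenvectors:
  fixes Z :: "real^'k^'n" and K :: "real^'n^'k"
  assumes sym: "transpose (Z ** K) = Z ** K"
    and Z_inj: "\<And>y. Z *v y = 0 \<Longrightarrow> y = 0"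
    and nondegenerate: "\<And>y. (Z ** K) *v (Z *v y) = 0 \<Longrightarrow> y = 0"
  obtains \<mu> :: "real^'k^'k" where
    "\<And>j j'. column j (Z ** \<mu>) \<bullet> column j' (Z ** \<mu>) = (if j = j' then 1 else 0)"
    "\<And>j. \<exists>lam. lam \<noteq> 0 \<and> is_eigenvector (Z ** K) (column j (Z ** \<mu>)) lam"
    "\<And>v lam. lam \<noteq> 0 \<Longrightarrow> is_eigenvector (Z ** K) v lam \<Longrightarrow> v \<in> span (columns (Z ** \<mu>))"
proof -
  define S where "S = range ((*v) Z)"
  have range_L: "(Z ** K) *v x \<in> S" for x
    by (simp add: S_def flip: matrix_vector_mul_assoc)
  have "subspace S" unfolding S_def by (intro linear_subspace_image subspace_UNIV) simp
  then obtain E where span_E: "span E = S" and orthogonal_E: "pairwise orthogonal E"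
    and unit_eigen: "\<And>e. e \<in> E \<Longrightarrow> norm e = 1 \<and> (\<exists>c. (Z ** K) *v e = c *\<^sub>R e)"
    using symmetric_matrix_invariant_subspace_orthonormal_eigenbasis[OF sym] range_L by metis
  have "independent E"
    using orthogonal_E unit_eigen by (intro pairwise_orthogonal_independent) force+
  from Z_inj this span_E obtain \<mu> :: "real^'k^'k" where \<mu>: "bij_betw (\<lambda>j. column j (Z ** \<mu>)) UNIV E"
    unfolding S_def by (rule basis_of_range_as_columns)
  then have col_E: "column j (Z ** \<mu>) \<in> E" and columns_E: "columns (Z ** \<mu>) = E" for j
    by (auto simp: bij_betw_def columns_def)
  show ?thesis
  proof
    show "column j (Z ** \<mu>) \<bullet> column j' (Z ** \<mu>) = (if j = j' then 1 else 0)" for j j'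
      using col_E[of j] col_E[of j'] unit_eigen[of "column j (Z ** \<mu>)"] orthogonal_E
        bij_betw_imp_inj_on[OF \<mu>]
      by (auto simp: pairwise_def orthogonal_def inj_def dot_square_norm)
    show "\<exists>lam. lam \<noteq> 0 \<and> is_eigenvector (Z ** K) (column j (Z ** \<mu>)) lam" for j
    proof -
      let ?e = "column j (Z ** \<mu>)"
      obtain c where c: "(Z ** K) *v ?e = c *\<^sub>R ?e" and "?e \<noteq> 0"
        using unit_eigen[OF col_E] by force
      moreover have "c \<noteq> 0"
      proof
        assume "c = 0"
        then have "(Z ** K) *v (Z *v column j \<mu>) = 0" using c by (simp add: column_matrix_matrix_mult)
        then show False using \<open>?e \<noteq> 0\<close> nondegenerate by (force simp: column_matrix_matrix_mult)
      qed
      ultimately show ?thesis unfolding is_eigenvector_def by blast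
    qed
    show "v \<in> span (columns (Z ** \<mu>))" if "lam \<noteq> 0" "is_eigenvector (Z ** K) v lam" for v lam
    proof -
      have "v = (1 / lam) *\<^sub>R ((Z ** K) *v v)" using that by (simp add: is_eigenvector_def)
      then show ?thesis using range_L \<open>subspace S\<close> columns_E span_E by (metis subspace_scale)
    qed
  qed
qed

lemma orthonormal_columns_cancel:
  fixes Z :: "real^'k^'n" and \<mu> :: "real^'k^'k"
  assumes "\<And>j j'. column j (Z ** \<mu>) \<bullet> column j' (Z ** \<mu>) = (if j = j' then 1 else 0)"
    and "x v* \<mu> = y v* \<mu>"
  shows "x = y"
proof -
  have "transpose (Z ** \<mu>) ** (Z ** \<mu>) = mat 1"
    using assms(1) by (simp add: matrix_mult_transpose_dot_column mat_def vec_eq_iff)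
  then have "transpose \<mu> ** (transpose Z ** (Z ** \<mu>)) = mat 1"
    by (simp add: matrix_transpose_mul matrix_mul_assoc)
  then have inverse: "(transpose Z ** (Z ** \<mu>)) ** transpose \<mu> = mat 1"
    by (simp add: matrix_left_right_inverse)
  have "x - y = ((transpose Z ** (Z ** \<mu>)) ** transpose \<mu>) *v (x - y)" by (simp add: inverse)
  also have "\<dots> = 0"
    using assms(2) by (simp add: vector_matrix_mult_diff_distrib flip: matrix_vector_mul_assoc)
  finally show ?thesis by simp
qed

lemma diagonal_matrix_mult_vec:
  fixes y :: "real^'n"
  shows "(\<chi> g h. if g = h then d g else 0) *v y = (\<chi> g. d g * y $ g)"
  by (simp add: matrix_vector_mult_def vec_eq_iff if_distrib if_distribR cong: if_cong)

locale membership_matrix =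
  fixes Z :: "real^'k^'n"
  assumes zero_one: "\<And>i g. Z $ i $ g = 0 \<or> Z $ i $ g = 1"
    and one_per_row: "\<And>i. \<exists>!g. Z $ i $ g = 1"
    and block_nonempty: "\<And>g. \<exists>i. Z $ i $ g = 1"
begin

definition block :: "'n \<Rightarrow> 'k" where
  "block i = (THE g. Z $ i $ g = 1)"

lemma entry: "Z $ i $ g = (if g = block i then 1 else 0)"
  using theI'[OF one_per_row[of i]] zero_one one_per_row unfolding block_def by metis

lemma block_surj: "\<exists>i. block i = g"
  using block_nonempty entry by (metis zero_neq_one)

lemma mult_vec_nth: "(Z *v y) $ i = y $ block i"
  by (simp add: matrix_vector_mult_def entry if_distrib[of "\<lambda>x. x * _"] cong: if_cong)

lemma mult_vec_eq_0: "Z *v y = 0 \<Longrightarrow> y = 0"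
  by (metis block_surj mult_vec_nth vec_eq_iff zero_index)

lemma sbm_W_nth: "sbm_W Z B $ i $ l = B $ block i $ block l"
  by (simp add: sbm_W_def matrix_matrix_mult_def transpose_def entry if_distrib if_distribR
      cong: if_cong)

definition block_degree :: "real^'k^'k \<Rightarrow> 'k \<Rightarrow> real" where
  "block_degree B g = (\<Sum>l\<in>UNIV. B $ g $ block l)"

lemma sbm_D_diag: "sbm_D Z B $ i $ i = block_degree B (block i)"
  by (simp add: sbm_D_def sbm_W_nth block_degree_def)

lemma block_degree_pos:
  assumes nonneg: "\<And>g h. 0 \<le> B $ g $ h" and rank: "rank B = CARD('k)"
  shows "block_degree B g > 0"
proof -
  have "block_degree B g \<noteq> 0"
  proof
    assume "block_degree B g = 0"
    then have "B $ g $ block l = 0" for l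
      using sum_nonneg_eq_0_iff[of UNIV "\<lambda>l. B $ g $ block l"] nonneg
      by (simp add: block_degree_def)
    then have "B $ g $ h = 0" for h using block_surj by metis
    then have "transpose B *v axis g 1 = transpose B *v 0"
      by (simp add: matrix_vector_mult_basis column_def transpose_def vec_eq_iff)
    moreover have "inj ((*v) (transpose B))"
      unfolding full_rank_injective[symmetric] rank_transpose by (rule rank)
    ultimately have "axis g (1::real) = 0" unfolding inj_def by blast
    then show False by (simp add: axis_eq_0_iff)
  qed
  moreover have "block_degree B g \<ge> 0" using nonneg by (simp add: block_degree_def sum_nonneg)
  ultimately show ?thesis by simp
qed

definition degree_scaling :: "real^'k^'k \<Rightarrow> real^'k^'k" where
  "degree_scaling B = (\<chi> g h. if g = h then inverse (sqrt (block_degree B g)) else 0)"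

lemma transpose_degree_scaling: "transpose (degree_scaling B) = degree_scaling B"
  by (simp add: vec_eq_iff transpose_def degree_scaling_def)

lemma sbm_D_inv_sqrt_mult: "sbm_D_inv_sqrt Z B ** Z = Z ** degree_scaling B"
proof -
  let ?\<delta> = "\<lambda>g. inverse (sqrt (block_degree B g))"
  have "(sbm_D_inv_sqrt Z B ** Z) $ i $ g = ?\<delta> (block i) * Z $ i $ g" for i g
    by (simp add: matrix_matrix_mult_def sbm_D_inv_sqrt_def sbm_D_diag
        if_distrib[of "\<lambda>x. x * _"] cong: if_cong)
  moreover have "(Z ** degree_scaling B) $ i $ g = Z $ i $ g * ?\<delta> g" for i g
    by (simp add: matrix_matrix_mult_def degree_scaling_def if_distrib[of "\<lambda>x. _ * x"]
        cong: if_cong)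
  ultimately show ?thesis by (simp add: vec_eq_iff entry)
qed

lemma sbm_L_factorization:
  "sbm_L Z B = Z ** (degree_scaling B ** B ** degree_scaling B ** transpose Z)"
proof -
  have "transpose (sbm_D_inv_sqrt Z B) = sbm_D_inv_sqrt Z B"
    by (simp add: vec_eq_iff transpose_def sbm_D_inv_sqrt_def)
  then have transposed: "transpose Z ** sbm_D_inv_sqrt Z B = degree_scaling B ** transpose Z"
    by (metis matrix_transpose_mul sbm_D_inv_sqrt_mult transpose_degree_scaling)
  have "sbm_L Z B = (sbm_D_inv_sqrt Z B ** Z) ** B ** (transpose Z ** sbm_D_inv_sqrt Z B)"
    by (simp add: sbm_L_def sbm_W_def matrix_mul_assoc)
  also have "\<dots> = Z ** (degree_scaling B ** B ** degree_scaling B ** transpose Z)"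
    by (simp add: sbm_D_inv_sqrt_mult transposed matrix_mul_assoc)
  finally show ?thesis .
qed

lemma sbm_L_symmetric:
  assumes "transpose B = B"
  shows "transpose (sbm_L Z B) = sbm_L Z B"
  by (simp add: sbm_L_factorization matrix_transpose_mul transpose_degree_scaling assms
      matrix_mul_assoc)

lemma sbm_L_range_nondegenerate:
  assumes "\<And>g h. 0 \<le> B $ g $ h" and rank: "rank B = CARD('k)"
    and "sbm_L Z B *v (Z *v y) = 0"
  shows "y = 0"
proof -
  have scaling_inj: "x = 0" if "degree_scaling B *v x = 0" for x
    using that block_degree_pos[OF assms(1) rank]
    by (simp add: degree_scaling_def diagonal_matrix_mult_vec vec_eq_iff) (metis less_irrefl)
  have B_inj: "x = 0" if "B *v x = 0" for x
    using that rank full_rank_injective[of B] by (metis injD matrix_vector_mult_0_right)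
  have gram_inj: "x = 0" if "transpose Z *v (Z *v x) = 0" for x
  proof -
    have "(Z *v x) \<bullet> (Z *v x) = 0" using that by (simp add: transpose_matrix_inner)
    then show ?thesis by (simp add: mult_vec_eq_0)
  qed
  have "Z *v (degree_scaling B *v (B *v (degree_scaling B *v (transpose Z *v (Z *v y))))) = 0"
    using assms(3) by (simp add: sbm_L_factorization flip: matrix_vector_mul_assoc)
  then show ?thesis using mult_vec_eq_0 scaling_inj B_inj gram_inj by blast
qed

end

theorem lemma3p1:
  fixes Z :: "real^'k^'n" and B :: "real^'k^'k"
  assumes Z01: "\<forall>i g. Z $ i $ g = 0 \<or> Z $ i $ g = 1"
    and Zrow: "\<forall>i. \<exists>!g. Z $ i $ g = 1"
    and Zcol: "\<forall>g. \<exists>i. Z $ i $ g = 1"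
    and B01: "\<forall>g h. 0 \<le> B $ g $ h \<and> B $ g $ h \<le> 1"
    and Bsym: "transpose B = B"
    and Brank: "rank B = CARD('k)"
  shows "\<exists>\<mu> :: real^'k^'k.
           (\<forall>j j'. column j (Z ** \<mu>) \<bullet> column j' (Z ** \<mu>) = (if j = j' then 1 else 0))
         \<and> (\<forall>j. \<exists>lam. lam \<noteq> 0 \<and> is_eigenvector (sbm_L Z B) (column j (Z ** \<mu>)) lam)
         \<and> (\<forall>v lam. lam \<noteq> 0 \<and> is_eigenvector (sbm_L Z B) v lam \<longrightarrow>
                v \<in> span (columns (Z ** \<mu>)))
         \<and> (\<forall>i j. (Z $ i) v* \<mu> = (Z $ j) v* \<mu> \<longleftrightarrow> Z $ i = Z $ j)"
proof -
  interpret membership_matrix Z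
    using Z01 Zrow Zcol by unfold_locales blast+
  define K where "K = degree_scaling B ** B ** degree_scaling B ** transpose Z"
  have L: "sbm_L Z B = Z ** K" unfolding K_def by (rule sbm_L_factorization)
  have symmetric: "transpose (Z ** K) = Z ** K" using sbm_L_symmetric[OF Bsym] unfolding L .
  have nonneg: "\<And>g h. 0 \<le> B $ g $ h" using B01 by blast
  have nondegenerate: "y = 0" if "(Z ** K) *v (Z *v y) = 0" for y
    using that by (rule sbm_L_range_nondegenerate[OF nonneg Brank, unfolded L])
  obtain \<mu> :: "real^'k^'k" where
    orthonormal: "\<And>j j'. column j (Z ** \<mu>) \<bullet> column j' (Z ** \<mu>) = (if j = j' then 1 else 0)"
    and "\<And>j. \<exists>lam. lam \<noteq> 0 \<and> is_eigenvector (Z ** K) (column j (Z ** \<mu>)) lam"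
    and "\<And>v lam. lam \<noteq> 0 \<Longrightarrow> is_eigenvector (Z ** K) v lam \<Longrightarrow> v \<in> span (columns (Z ** \<mu>))"
    using symmetric_matrix_factorization_eigenvectors[OF symmetric mult_vec_eq_0 nondegenerate]
    by metis
  moreover have "(Z $ i) v* \<mu> = (Z $ j) v* \<mu> \<longleftrightarrow> Z $ i = Z $ j" for i j
    using orthonormal_columns_cancel[OF orthonormal, of "Z $ i" "Z $ j"] by auto
  ultimately show ?thesis unfolding L by (intro exI[of _ \<mu>]) blast
qed

end
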